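(* Let $\mathfrak{g}$ be a finite-dimensional nilpotent Lie algebra, and let $M$ be a finite-dimensional non-trivial irreducible Leibniz $\mathfrak{g}$-bimodule. Then $\mathrm{HL}^n(\mathfrak{g},M)=0$ for every positive integer $n$. Moreover, if $M$ is symmetric, then $\mathrm{HL}^n(\mathfrak{g},M)=0$ for every non-negative integer $n$.
   Context: $\mathfrak{g}$ is regarded as a left Leibniz algebra with $xy=[x,y]$. A Leibniz $\mathfrak{g}$-bimodule is a vector space $M$ with bilinear actions $x\cdot m$, $m\cdot x$ satisfying $(xy)\cdot m=x\cdot(y\cdot m)-y\cdot(x\cdot m)$, $(x\cdot m)\cdot y=x\cdot(m\cdot y)-m\cdot(xy)$, $(m\cdot x)\cdot y=m\cdot(xy)-x\cdot(m\cdot y)$; it is irreducible if nonzero with no sub-bimodules other than $0$ and $M$; non-trivial if the actions are not both zero; symmetric if $m\cdot x=-x\cdot m$. $\mathrm{HL}^n(\mathfrak{g},M)$ is the cohomology of $\mathrm{Hom}(\mathfrak{g}^{\otimes n},M)$ with $(\mathrm{d}^nf)(x_1,\dots,x_{n+1})=\sum_{i=1}^n(-1)^{i+1}x_i\cdot f(\dots,\hat{x}_i,\dots)+(-1)^{n+1}f(x_1,\dots,x_n)\cdot x_{n+1}+\sum_{i<j}(-1)^if(x_1,\dots,\hat{x}_i,\dots,x_ix_j,\dots,x_{n+1})$ ($x_ix_j$ in the $j$-th position). *)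

theory Defs
  imports Complex_Main
begin

definition lie_algebra :: "('k::field \<Rightarrow> 'g::ab_group_add \<Rightarrow> 'g) \<Rightarrow> ('g \<Rightarrow> 'g \<Rightarrow> 'g) \<Rightarrow> bool" where
  "lie_algebra scale br \<longleftrightarrow>
     Vector_Spaces.vector_space scale \<and>
     (\<forall>x. Modules.module_hom scale scale (br x)) \<and>
     (\<forall>y. Modules.module_hom scale scale (\<lambda>x. br x y)) \<and>
     (\<forall>x. br x x = 0) \<and>
     (\<forall>x y z. br x (br y z) + br y (br z x) + br z (br x y) = 0)"

definition finite_dimensional :: "('k::field \<Rightarrow> 'v::ab_group_add \<Rightarrow> 'v) \<Rightarrow> bool" where
  "finite_dimensional scale \<longleftrightarrow> (\<exists>B. finite B \<and> module.span scale B = UNIV)"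

fun lcs :: "('k::field \<Rightarrow> 'g::ab_group_add \<Rightarrow> 'g) \<Rightarrow> ('g \<Rightarrow> 'g \<Rightarrow> 'g) \<Rightarrow> nat \<Rightarrow> 'g set" where
  "lcs scale br 0 = UNIV"
| "lcs scale br (Suc k) = module.span scale {br x y | x y. y \<in> lcs scale br k}"

definition nilpotent_lie :: "('k::field \<Rightarrow> 'g::ab_group_add \<Rightarrow> 'g) \<Rightarrow> ('g \<Rightarrow> 'g \<Rightarrow> 'g) \<Rightarrow> bool" where
  "nilpotent_lie scale br \<longleftrightarrow> (\<exists>k. lcs scale br k = {0})"

text \<open>Leibniz bimodule over g (viewed as left Leibniz algebra with xy = br x y):
  left action la x m = x.m, right action ra m x = m.x.\<close>
definition leibniz_bimodule ::
  "('k::field \<Rightarrow> 'g::ab_group_add \<Rightarrow> 'g) \<Rightarrow> ('g \<Rightarrow> 'g \<Rightarrow> 'g) \<Rightarrow>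
   ('k \<Rightarrow> 'm::ab_group_add \<Rightarrow> 'm) \<Rightarrow> ('g \<Rightarrow> 'm \<Rightarrow> 'm) \<Rightarrow> ('m \<Rightarrow> 'g \<Rightarrow> 'm) \<Rightarrow> bool" where
  "leibniz_bimodule scale br smult la ra \<longleftrightarrow>
     Vector_Spaces.vector_space smult \<and>
     (\<forall>x. Modules.module_hom smult smult (la x)) \<and>
     (\<forall>m. Modules.module_hom scale smult (\<lambda>x. la x m)) \<and>
     (\<forall>x. Modules.module_hom smult smult (\<lambda>m. ra m x)) \<and>
     (\<forall>m. Modules.module_hom scale smult (ra m)) \<and>
     (\<forall>x y m. la (br x y) m = la x (la y m) - la y (la x m)) \<and>
     (\<forall>x y m. ra (la x m) y = la x (ra m y) - ra m (br x y)) \<and>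
     (\<forall>x y m. ra (ra m x) y = ra m (br x y) - la x (ra m y))"

definition sub_bimodule ::
  "('k::field \<Rightarrow> 'm::ab_group_add \<Rightarrow> 'm) \<Rightarrow> ('g \<Rightarrow> 'm \<Rightarrow> 'm) \<Rightarrow> ('m \<Rightarrow> 'g \<Rightarrow> 'm) \<Rightarrow> 'm set \<Rightarrow> bool" where
  "sub_bimodule smult la ra N \<longleftrightarrow>
     module.subspace smult N \<and> (\<forall>x. \<forall>m\<in>N. la x m \<in> N \<and> ra m x \<in> N)"

definition irreducible_bimodule ::
  "('k::field \<Rightarrow> 'm::ab_group_add \<Rightarrow> 'm) \<Rightarrow> ('g \<Rightarrow> 'm \<Rightarrow> 'm) \<Rightarrow> ('m \<Rightarrow> 'g \<Rightarrow> 'm) \<Rightarrow> bool" where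
  "irreducible_bimodule smult la ra \<longleftrightarrow>
     (\<exists>m::'m. m \<noteq> 0) \<and>
     (\<forall>N. sub_bimodule smult la ra N \<longrightarrow> N = {0} \<or> N = UNIV)"

definition nontrivial_bimodule :: "('g \<Rightarrow> 'm::ab_group_add \<Rightarrow> 'm) \<Rightarrow> ('m \<Rightarrow> 'g \<Rightarrow> 'm) \<Rightarrow> bool" where
  "nontrivial_bimodule la ra \<longleftrightarrow> \<not> ((\<forall>x m. la x m = 0) \<and> (\<forall>x m. ra m x = 0))"

definition symmetric_bimodule :: "('g \<Rightarrow> 'm::ab_group_add \<Rightarrow> 'm) \<Rightarrow> ('m \<Rightarrow> 'g \<Rightarrow> 'm) \<Rightarrow> bool" where
  "symmetric_bimodule la ra \<longleftrightarrow> (\<forall>x m. ra m x = - la x m)"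

text \<open>n-cochains: elements of Hom(g^{\<otimes>n}, M), represented as maps on lists of length n
  that are linear in each argument (values on lists of other lengths are irrelevant).\<close>
definition cochain ::
  "('k::field \<Rightarrow> 'g::ab_group_add \<Rightarrow> 'g) \<Rightarrow> ('k \<Rightarrow> 'm::ab_group_add \<Rightarrow> 'm) \<Rightarrow> nat \<Rightarrow> ('g list \<Rightarrow> 'm) \<Rightarrow> bool" where
  "cochain scale smult n f \<longleftrightarrow>
     (\<forall>us vs x y a. length us + length vs + 1 = n \<longrightarrow>
        f (us @ (x + y) # vs) = f (us @ x # vs) + f (us @ y # vs) \<and>
        f (us @ scale a x # vs) = smult a (f (us @ x # vs)))"

definition del :: "nat \<Rightarrow> 'a list \<Rightarrow> 'a list" where
  "del i xs = take i xs @ drop (Suc i) xs"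

text \<open>Leibniz coboundary d^n, with 0-based indices: for xs = [x_1,...,x_{n+1}],
  (d^n f)(xs) = sum_{i=1}^n (-1)^{i+1} x_i.f(..x_i^..) + (-1)^{n+1} f(x_1..x_n).x_{n+1}
   + sum_{i<j} (-1)^i f(x_1,..x_i^..,x_i x_j,..,x_{n+1}) (x_i x_j in the j-th position).\<close>
definition leib_d ::
  "('g \<Rightarrow> 'g \<Rightarrow> 'g) \<Rightarrow> ('k::field \<Rightarrow> 'm::ab_group_add \<Rightarrow> 'm) \<Rightarrow> ('g \<Rightarrow> 'm \<Rightarrow> 'm) \<Rightarrow> ('m \<Rightarrow> 'g \<Rightarrow> 'm) \<Rightarrow>
   nat \<Rightarrow> ('g list \<Rightarrow> 'm) \<Rightarrow> 'g list \<Rightarrow> 'm" where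
  "leib_d br smult la ra n f xs =
     (\<Sum>i<n. smult ((-1) ^ i) (la (xs ! i) (f (del i xs))))
     + smult ((-1) ^ (n + 1)) (ra (f (take n xs)) (xs ! n))
     + (\<Sum>j\<le>n. \<Sum>i<j. smult ((-1) ^ (i + 1)) (f (del i (xs[j := br (xs ! i) (xs ! j)]))))"

text \<open>HL^n(g,M) = 0: every n-cocycle is an n-coboundary (for n = 0 the coboundaries are 0).\<close>
definition HL_vanishes ::
  "('k::field \<Rightarrow> 'g::ab_group_add \<Rightarrow> 'g) \<Rightarrow> ('g \<Rightarrow> 'g \<Rightarrow> 'g) \<Rightarrow>
   ('k \<Rightarrow> 'm::ab_group_add \<Rightarrow> 'm) \<Rightarrow> ('g \<Rightarrow> 'm \<Rightarrow> 'm) \<Rightarrow> ('m \<Rightarrow> 'g \<Rightarrow> 'm) \<Rightarrow> nat \<Rightarrow> bool" where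
  "HL_vanishes scale br smult la ra n \<longleftrightarrow>
     (\<forall>f. cochain scale smult n f \<and>
          (\<forall>xs. length xs = Suc n \<longrightarrow> leib_d br smult la ra n f xs = 0) \<longrightarrow>
          (case n of
             0 \<Rightarrow> f [] = 0
           | Suc k \<Rightarrow> (\<exists>g. cochain scale smult k g \<and>
                        (\<forall>xs. length xs = n \<longrightarrow> f xs = leib_d br smult la ra k g xs))))"

end

theory Submission
  imports Defs
begin

text \<open>An irreducible Leibniz bimodule is either symmetric or antisymmetric (\<open>m\<cdot>x = 0\<close>).
  If g is nilpotent and acts nontrivially, pick \<open>z\<close> in the last term of the lower central
  series that still acts nontrivially; then \<open>[g, z]\<close> acts trivially, so by Schur's lemma
  \<open>z\<cdot>-\<close> is invertible and commutes with both actions, and \<open>ad z\<close> is a nilpotent derivation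
  of g, hence acts nilpotently on cochains and commutes with \<open>d\<close>. Cartan's formula
  \<open>d i\<^sub>z + i\<^sub>z d = (z\<cdot>-) - ad z\<close> on cochains then shows, by induction on the nilpotency index
  of \<open>ad z\<close> on a cocycle, that every cocycle of positive degree is a coboundary. In degree 0 a
  cocycle \<open>m\<close> satisfies \<open>m\<cdot>z = 0\<close>, i.e. \<open>z\<cdot>m = 0\<close> when \<open>M\<close> is symmetric, so \<open>m = 0\<close>.\<close>

lemma length_del [simp]: "i < length xs \<Longrightarrow> length (del i xs) = length xs - 1"
  by (auto simp: del_def)

lemma nth_del: "k < length xs - 1 \<Longrightarrow> del i xs ! k = xs ! (if k < i then k else Suc k)"
  by (auto simp: del_def nth_append min_def)

lemma del_Cons_0 [simp]: "del 0 (z # ys) = ys"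
  by (simp add: del_def)

lemma del_Cons_Suc [simp]: "del (Suc i) (z # ys) = z # del i ys"
  by (simp add: del_def)

lemma del_update_less: "k < i \<Longrightarrow> del i (xs[k := v]) = (del i xs)[k := v]"
  by (auto simp: del_def list_update_append min_def take_update_swap list_update_beyond)

lemma del_update_same: "del i (xs[i := v]) = del i xs"
  by (auto simp: del_def)

lemma del_update_greater: "i < k \<Longrightarrow> del i (xs[k := v]) = (del i xs)[k - 1 := v]"
  by (cases k) (auto simp: del_def list_update_append min_def drop_update_swap)

lemma cochain_update:
  assumes "cochain scale smult n f" "length ys = n" "p < n"
  shows "f (ys[p := x + y]) = f (ys[p := x]) + f (ys[p := y])"
    and "f (ys[p := scale a x]) = smult a (f (ys[p := x]))"
proof -
  have split: "ys[p := w] = take p ys @ w # drop (Suc p) ys" for w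
    using assms by (simp add: upd_conv_take_nth_drop)
  have "length (take p ys) + length (drop (Suc p) ys) + 1 = n"
    using assms by simp
  then show "f (ys[p := x + y]) = f (ys[p := x]) + f (ys[p := y])"
    and "f (ys[p := scale a x]) = smult a (f (ys[p := x]))"
    using assms(1) unfolding split cochain_def by blast+
qed

lemma cochainI:
  fixes f :: "'g::ab_group_add list \<Rightarrow> 'm::ab_group_add" and scale :: "'k::field \<Rightarrow> 'g \<Rightarrow> 'g"
  assumes "\<And>ys p x y. length ys = n \<Longrightarrow> p < n \<Longrightarrow> f (ys[p := x + y]) = f (ys[p := x]) + f (ys[p := y])"
    and "\<And>ys p x a. length ys = n \<Longrightarrow> p < n \<Longrightarrow> f (ys[p := scale a x]) = smult a (f (ys[p := x]))"
  shows "cochain scale smult n f"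
  unfolding cochain_def
proof (intro allI impI conjI)
  fix us vs :: "'g list" and x y :: 'g and a :: 'k
  assume "length us + length vs + 1 = n"
  then show "f (us @ (x + y) # vs) = f (us @ x # vs) + f (us @ y # vs)"
    and "f (us @ scale a x # vs) = smult a (f (us @ x # vs))"
    using assms(1)[of "us @ x # vs" "length us" x y] assms(2)[of "us @ x # vs" "length us" a x] by simp_all
qed

lemma cochain_update_0:
  assumes "cochain scale smult n f" "length ys = n" "p < n"
  shows "f (ys[p := 0]) = 0"
  using cochain_update(1)[OF assms, of 0 0] by simp

lemma cochain_Cons:
  assumes "cochain scale smult (Suc n) f"
  shows "cochain scale smult n (\<lambda>ys. f (z # ys))"
  using assms unfolding cochain_def by (metis Cons_eq_appendI add_Suc length_Cons)

lemma cochain_compose: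
  assumes "cochain scale smult n g"
    and "\<And>a b. T (a + b) = T a + T b" "\<And>c a. T (smult c a) = smult c (T a)"
  shows "cochain scale smult n (\<lambda>ys. T (g ys))"
  using assms unfolding cochain_def by simp

lemma cochain_add:
  assumes "module smult" "cochain scale smult n g" "cochain scale smult n h"
  shows "cochain scale smult n (\<lambda>ys. g ys + h ys)"
  using assms unfolding cochain_def by (simp add: module.scale_right_distrib algebra_simps)

section \<open>Derivations of the Lie algebra acting on cochains\<close>

definition deriv_action :: "('g \<Rightarrow> 'g) \<Rightarrow> ('g list \<Rightarrow> 'm::ab_group_add) \<Rightarrow> 'g list \<Rightarrow> 'm" where
  "deriv_action \<delta> \<phi> xs = (\<Sum>k<length xs. \<phi> (xs[k := \<delta> (xs ! k)]))"

lemma deriv_action_del: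
  assumes "i < length xs"
  shows "deriv_action \<delta> \<phi> (del i xs) = (\<Sum>k\<in>{..<length xs} - {i}. \<phi> (del i (xs[k := \<delta> (xs ! k)])))"
  unfolding deriv_action_def
proof (rule sum.reindex_bij_witness[where j = "\<lambda>k. if k < i then k else Suc k"
      and i = "\<lambda>k. if k < i then k else k - 1"])
  fix k assume "k \<in> {..<length (del i xs)}"
  then have "k < length xs - 1"
    using assms by simp
  then show "\<phi> (del i (xs[(if k < i then k else Suc k) := \<delta> (xs ! (if k < i then k else Suc k))]))
      = \<phi> ((del i xs)[k := \<delta> (del i xs ! k)])"
    by (auto simp: del_update_less del_update_greater nth_del)
qed (use assms in auto)

lemma cochain_deriv_action:
  fixes f :: "'g::ab_group_add list \<Rightarrow> 'm::ab_group_add" and scale :: "'k::field \<Rightarrow> 'g \<Rightarrow> 'g"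
  assumes module: "module smult" and f: "cochain scale smult n f" and \<delta>: "module_hom scale scale \<delta>"
  shows "cochain scale smult n (deriv_action \<delta> f)"
proof (rule cochainI)
  fix ys :: "'g list" and p :: nat and x y :: 'g and a :: 'k
  assume ys: "length ys = n" and p: "p < n"
  have "f ((ys[p := x + y])[k := \<delta> (ys[p := x + y] ! k)])
      = f ((ys[p := x])[k := \<delta> (ys[p := x] ! k)]) + f ((ys[p := y])[k := \<delta> (ys[p := y] ! k)]) \<and>
    f ((ys[p := scale a x])[k := \<delta> (ys[p := scale a x] ! k)])
      = smult a (f ((ys[p := x])[k := \<delta> (ys[p := x] ! k)]))" if "k < n" for k
  proof (cases "k = p")
    case True
    then show ?thesis
      using cochain_update[OF f ys p] ys p by (simp add: module_hom.add[OF \<delta>] module_hom.scale[OF \<delta>])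
  next
    case False
    then show ?thesis
      using cochain_update[OF f, of "ys[k := \<delta> (ys ! k)]" p] ys p that by (simp add: list_update_swap)
  qed
  then show "deriv_action \<delta> f (ys[p := x + y]) = deriv_action \<delta> f (ys[p := x]) + deriv_action \<delta> f (ys[p := y])"
    and "deriv_action \<delta> f (ys[p := scale a x]) = smult a (deriv_action \<delta> f (ys[p := x]))"
    unfolding deriv_action_def using ys by (simp_all add: sum.distrib module.scale_sum_right[OF module])
qed

text \<open>The two terms \<open>k = i\<close> and \<open>k = j\<close> on the left combine, by the Leibniz rule for \<open>\<delta>\<close>,
  into the term at position \<open>j\<close> on the right; all other terms match one to one.\<close>
lemma deriv_action_bracket_term:
  assumes f: "cochain scale smult n f" and xs: "length xs = Suc n" and ij: "i < j" "j \<le> n"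
    and deriv: "\<And>x y. \<delta> (br x y) = br (\<delta> x) y + br x (\<delta> y)"
  shows "(\<Sum>k<Suc n. let ys = xs[k := \<delta> (xs ! k)] in f (del i (ys[j := br (ys ! i) (ys ! j)])))
       = deriv_action \<delta> f (del i (xs[j := br (xs ! i) (xs ! j)]))"
proof -
  define ys where "ys = xs[j := br (xs ! i) (xs ! j)]"
  define F where "F k = (let ys = xs[k := \<delta> (xs ! k)] in f (del i (ys[j := br (ys ! i) (ys ! j)])))" for k
  define G where "G k = f (del i (ys[k := \<delta> (ys ! k)]))" for k
  let ?R = "{..<Suc n} - {i} - {j}"
  have "deriv_action \<delta> f (del i ys) = sum G ({..<Suc n} - {i})"
    unfolding G_def using deriv_action_del[of i ys \<delta> f] ij xs by (simp add: ys_def)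
  also have "\<dots> = G j + sum G ?R"
    using ij by (subst sum.remove[of _ j]) auto
  finally have rhs: "deriv_action \<delta> f (del i ys) = G j + sum G ?R" .
  have lhs: "sum F {..<Suc n} = F i + F j + sum F ?R"
    using ij by (simp del: sum.lessThan_Suc add: sum.remove[of _ i] sum.remove[of _ j] add.assoc)
  have "sum F ?R = sum G ?R"
    using ij xs by (intro sum.cong) (auto simp: F_def G_def ys_def list_update_swap)
  moreover have "G j = F i + F j"
  proof -
    have "i \<noteq> j" using ij by simp
    then have "F i = f ((del i xs)[j - 1 := br (\<delta> (xs ! i)) (xs ! j)])"
      and "F j = f ((del i xs)[j - 1 := br (xs ! i) (\<delta> (xs ! j))])"
      and "G j = f ((del i xs)[j - 1 := br (\<delta> (xs ! i)) (xs ! j) + br (xs ! i) (\<delta> (xs ! j))])"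
      using ij xs by (simp_all add: F_def G_def ys_def list_update_swap del_update_same del_update_greater deriv)
    then show ?thesis
      using cochain_update(1)[OF f, of "(del i xs)" "j - 1"] ij xs by simp
  qed
  ultimately show ?thesis
    using lhs rhs unfolding ys_def F_def by simp
qed

fun apply_at :: "('g \<Rightarrow> 'g) \<Rightarrow> nat list \<Rightarrow> 'g list \<Rightarrow> 'g list" where
  "apply_at \<delta> [] xs = xs"
| "apply_at \<delta> (p # ps) xs = apply_at \<delta> ps (xs[p := \<delta> (xs ! p)])"

lemma length_apply_at [simp]: "length (apply_at \<delta> ps xs) = length xs"
  by (induction ps arbitrary: xs) auto

lemma nth_apply_at: "p < length xs \<Longrightarrow> apply_at \<delta> ps xs ! p = (\<delta> ^^ count_list ps p) (xs ! p)"
  by (induction ps arbitrary: xs) (auto simp: nth_list_update funpow_swap1)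

lemma funpow_deriv_action:
  "(deriv_action \<delta> ^^ N) \<phi> xs
     = (\<Sum>ps\<in>{ps. set ps \<subseteq> {..<length xs} \<and> length ps = N}. \<phi> (apply_at \<delta> ps xs))"
proof (induction N arbitrary: xs)
  case 0
  have "{ps. set ps \<subseteq> {..<length xs} \<and> length ps = 0} = {[]}"
    by auto
  then show ?case by simp
next
  case (Suc N)
  let ?S = "{ps. set ps \<subseteq> {..<length xs} \<and> length ps = N}"
  have "(deriv_action \<delta> ^^ Suc N) \<phi> xs = (\<Sum>k<length xs. \<Sum>ps\<in>?S. \<phi> (apply_at \<delta> (k # ps) xs))"
    by (simp add: deriv_action_def Suc.IH)
  also have "\<dots> = (\<Sum>(ps, k)\<in>?S \<times> {..<length xs}. \<phi> (apply_at \<delta> (k # ps) xs))"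
    by (subst sum.swap) (simp add: sum.cartesian_product)
  also have "\<dots> = (\<Sum>ps\<in>(\<lambda>(ps, k). k # ps) ` (?S \<times> {..<length xs}). \<phi> (apply_at \<delta> ps xs))"
    by (subst sum.reindex) (auto simp: inj_on_def intro!: sum.cong)
  also have "(\<lambda>(ps, k). k # ps) ` (?S \<times> {..<length xs})
      = {ps. set ps \<subseteq> {..<length xs} \<and> length ps = Suc N}"
    by (rule lists_length_Suc_eq[symmetric])
  finally show ?case .
qed

text \<open>Among \<open>n * K\<close> applications spread over \<open>n\<close> positions, some position receives \<open>K\<close> of them.\<close>
lemma funpow_deriv_action_eq_0:
  assumes f: "cochain scale smult n f" and "n > 0" and xs: "length xs = n"
    and nil: "\<And>y. (\<delta> ^^ K) y = 0" and "\<delta> 0 = 0"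
  shows "(deriv_action \<delta> ^^ (n * K)) f xs = 0"
proof -
  have "f (apply_at \<delta> ps xs) = 0" if ps: "set ps \<subseteq> {..<n}" "length ps = n * K" for ps
  proof -
    obtain p where p: "p < n" "K \<le> count_list ps p"
    proof (rule ccontr)
      assume "\<not> thesis"
      then have "sum (count_list ps) {..<n} < sum (\<lambda>_. K) {..<n}"
        using that \<open>n > 0\<close> by (intro sum_strict_mono) (auto intro: not_le_imp_less)
      moreover have "sum (count_list ps) {..<n} = length ps"
        using ps by (intro sum_count_set) auto
      ultimately show False
        using ps by simp
    qed
    have "apply_at \<delta> ps xs ! p = (\<delta> ^^ (count_list ps p - K)) ((\<delta> ^^ K) (xs ! p))"
      using nth_apply_at[of p xs \<delta> ps] p xs
      by (simp flip: funpow_add[THEN fun_cong, unfolded comp_def])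
    also have "\<dots> = 0"
    proof -
      have "(\<delta> ^^ j) 0 = 0" for j
        using \<open>\<delta> 0 = 0\<close> by (induction j) simp_all
      then show ?thesis
        by (simp add: nil)
    qed
    finally have "apply_at \<delta> ps xs = (apply_at \<delta> ps xs)[p := 0]"
      by (metis list_update_id)
    then show ?thesis
      using cochain_update_0[OF f, of "apply_at \<delta> ps xs" p] p xs by simp
  qed
  then show ?thesis
    unfolding funpow_deriv_action using xs by simp
qed
section \<open>Cartan's formula and vanishing of cohomology\<close>

definition is_cocycle ::
  "('g \<Rightarrow> 'g \<Rightarrow> 'g) \<Rightarrow> ('k::field \<Rightarrow> 'm::ab_group_add \<Rightarrow> 'm) \<Rightarrow> ('g \<Rightarrow> 'm \<Rightarrow> 'm) \<Rightarrow> ('m \<Rightarrow> 'g \<Rightarrow> 'm) \<Rightarrow>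
   nat \<Rightarrow> ('g list \<Rightarrow> 'm) \<Rightarrow> bool" where
  "is_cocycle br smult la ra n f \<longleftrightarrow> (\<forall>xs. length xs = Suc n \<longrightarrow> leib_d br smult la ra n f xs = 0)"

definition is_coboundary ::
  "('k::field \<Rightarrow> 'g::ab_group_add \<Rightarrow> 'g) \<Rightarrow> ('g \<Rightarrow> 'g \<Rightarrow> 'g) \<Rightarrow>
   ('k \<Rightarrow> 'm::ab_group_add \<Rightarrow> 'm) \<Rightarrow> ('g \<Rightarrow> 'm \<Rightarrow> 'm) \<Rightarrow> ('m \<Rightarrow> 'g \<Rightarrow> 'm) \<Rightarrow> nat \<Rightarrow> ('g list \<Rightarrow> 'm) \<Rightarrow> bool" where
  "is_coboundary scale br smult la ra n f \<longleftrightarrow>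
     (\<exists>g. cochain scale smult n g \<and> (\<forall>xs. length xs = Suc n \<longrightarrow> f xs = leib_d br smult la ra n g xs))"

lemma HL_vanishes_0_iff:
  "HL_vanishes scale br smult la ra 0 \<longleftrightarrow>
     (\<forall>f. cochain scale smult 0 f \<longrightarrow> is_cocycle br smult la ra 0 f \<longrightarrow> f [] = 0)"
  by (auto simp: HL_vanishes_def is_cocycle_def)

lemma HL_vanishes_Suc_iff:
  "HL_vanishes scale br smult la ra (Suc n) \<longleftrightarrow>
     (\<forall>f. cochain scale smult (Suc n) f \<longrightarrow> is_cocycle br smult la ra (Suc n) f \<longrightarrow>
          is_coboundary scale br smult la ra n f)"
  by (auto simp: HL_vanishes_def is_cocycle_def is_coboundary_def)

context
  fixes smult :: "'k::field \<Rightarrow> 'm::ab_group_add \<Rightarrow> 'm" and la :: "'g::ab_group_add \<Rightarrow> 'm \<Rightarrow> 'm"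
    and ra :: "'m \<Rightarrow> 'g \<Rightarrow> 'm" and br :: "'g \<Rightarrow> 'g \<Rightarrow> 'g"
  assumes module: "module smult"
    and la_hom: "\<And>x. module_hom smult smult (la x)"
    and ra_hom: "\<And>x. module_hom smult smult (\<lambda>m. ra m x)"
begin

private lemmas la_add = module_hom.add[OF la_hom]
  and la_sum = module_hom.sum[OF la_hom]
  and ra_add = module_hom.add[OF ra_hom]
  and ra_sum = module_hom.sum[OF ra_hom, simplified]
  and scale_simps = module.scale_sum_right[OF module] module.scale_right_distrib[OF module]
    module.scale_minus_left[OF module] module.scale_minus_right[OF module]
    module.scale_scale[OF module] module.scale_one[OF module] module.scale_zero_right[OF module]

lemma leib_d_add:
  "leib_d br smult la ra n (\<lambda>ys. g ys + h ys) xs = leib_d br smult la ra n g xs + leib_d br smult la ra n h xs"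
  unfolding leib_d_def by (simp add: la_add ra_add scale_simps sum.distrib sum_subtractf sum_negf algebra_simps)

lemma leib_d_zero: "leib_d br smult la ra n (\<lambda>ys. 0) xs = 0"
  unfolding leib_d_def by (simp add: scale_simps module_hom.zero[OF la_hom] module_hom.zero[OF ra_hom])

lemma leib_d_compose_equivariant:
  assumes "\<And>a b. T (a + b) = T a + T b" "\<And>c a. T (smult c a) = smult c (T a)"
    and "\<And>x m. T (la x m) = la x (T m)" "\<And>x m. T (ra m x) = ra (T m) x"
  shows "leib_d br smult la ra n (\<lambda>ys. T (g ys)) xs = T (leib_d br smult la ra n g xs)"
proof -
  interpret T: additive T
    by standard (rule assms(1))
  show ?thesis
    unfolding leib_d_def by (simp add: T.add T.sum assms(2-4))
qed

text \<open>Cartan's formula \<open>i\<^sub>z d + d i\<^sub>z = \<theta>\<^sub>z\<close>, where \<open>i\<^sub>z\<close> inserts \<open>z\<close> as first argument and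
  \<open>\<theta>\<^sub>z f = la z \<circ> f - deriv_action (br z) f\<close>.\<close>
lemma cartan_formula:
  assumes "length xs = Suc m"
  shows "leib_d br smult la ra (Suc m) f (z # xs) + leib_d br smult la ra m (\<lambda>ys. f (z # ys)) xs
     = la z (f xs) - deriv_action (br z) f xs"
proof -
  have "{..<length xs} = {..m}"
    using assms by auto
  then show ?thesis
    unfolding leib_d_def deriv_action_def sum.lessThan_Suc_shift sum.atMost_Suc_shift
    by (simp del: sum.lessThan_Suc sum.atMost_Suc add: scale_simps sum.distrib sum_negf[symmetric])
      (simp add: sum_subtractf sum_negf)
qed
lemma deriv_action_leib_d_commute:
  assumes f: "cochain scale smult n f" and xs: "length xs = Suc n"
    and deriv: "\<And>x y. br z (br x y) = br (br z x) y + br x (br z y)"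
    and la_br: "\<And>x m. la (br z x) m = 0" and ra_br: "\<And>x m. ra m (br z x) = 0"
  shows "deriv_action (br z) (leib_d br smult la ra n f) xs = leib_d br smult la ra n (deriv_action (br z) f) xs"
proof -
  define xk where "xk k = xs[k := br z (xs ! k)]" for k
  have nth_xk: "xk k ! p = (if p = k then br z (xs ! k) else xs ! p)" if "p < Suc n" for k p
    using that xs by (simp add: xk_def nth_list_update)
  have left: "(\<Sum>k<Suc n. \<Sum>i<n. smult ((-1) ^ i) (la (xk k ! i) (f (del i (xk k)))))
      = (\<Sum>i<n. smult ((-1) ^ i) (la (xs ! i) (deriv_action (br z) f (del i xs))))"
  proof (subst sum.swap, intro sum.cong refl)
    fix i assume i: "i \<in> {..<n}"
    have "(\<Sum>k<Suc n. smult ((-1) ^ i) (la (xk k ! i) (f (del i (xk k)))))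
        = smult ((-1) ^ i) (la (xk i ! i) (f (del i (xk i)))) +
          (\<Sum>k\<in>{..<Suc n} - {i}. smult ((-1) ^ i) (la (xk k ! i) (f (del i (xk k)))))"
      using i by (intro sum.remove) auto
    also have "\<dots> = (\<Sum>k\<in>{..<Suc n} - {i}. smult ((-1) ^ i) (la (xs ! i) (f (del i (xk k)))))"
      using i by (auto simp: nth_xk la_br scale_simps intro!: sum.cong)
    also have "\<dots> = smult ((-1) ^ i) (la (xs ! i) (deriv_action (br z) f (del i xs)))"
      using deriv_action_del[of i xs "br z" f] i xs by (simp add: la_sum scale_simps xk_def)
    finally show "(\<Sum>k<Suc n. smult ((-1) ^ i) (la (xk k ! i) (f (del i (xk k)))))
        = smult ((-1) ^ i) (la (xs ! i) (deriv_action (br z) f (del i xs)))" .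
  qed
  have right: "(\<Sum>k<Suc n. smult ((-1) ^ (n + 1)) (ra (f (take n (xk k))) (xk k ! n)))
      = smult ((-1) ^ (n + 1)) (ra (deriv_action (br z) f (take n xs)) (xs ! n))"
  proof -
    have "(\<Sum>k<Suc n. smult ((-1) ^ (n + 1)) (ra (f (take n (xk k))) (xk k ! n)))
        = (\<Sum>k<n. smult ((-1) ^ (n + 1)) (ra (f (take n (xk k))) (xk k ! n)))"
      by (simp add: nth_xk ra_br scale_simps)
    also have "\<dots> = (\<Sum>k<n. smult ((-1) ^ (n + 1)) (ra (f ((take n xs)[k := br z (take n xs ! k)])) (xs ! n)))"
      by (auto simp: nth_xk xk_def take_update_swap intro!: sum.cong)
    also have "\<dots> = smult ((-1) ^ (n + 1)) (ra (deriv_action (br z) f (take n xs)) (xs ! n))"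
      using xs by (simp add: deriv_action_def ra_sum scale_simps)
    finally show ?thesis .
  qed
  have brackets: "(\<Sum>k<Suc n. \<Sum>j\<le>n. \<Sum>i<j.
        smult ((-1) ^ (i + 1)) (f (del i ((xk k)[j := br (xk k ! i) (xk k ! j)]))))
      = (\<Sum>j\<le>n. \<Sum>i<j. smult ((-1) ^ (i + 1)) (deriv_action (br z) f (del i (xs[j := br (xs ! i) (xs ! j)]))))"
  proof -
    have "(\<Sum>k<Suc n. \<Sum>j\<le>n. \<Sum>i<j. smult ((-1) ^ (i + 1)) (f (del i ((xk k)[j := br (xk k ! i) (xk k ! j)]))))
      = (\<Sum>j\<le>n. \<Sum>i<j. \<Sum>k<Suc n. smult ((-1) ^ (i + 1)) (f (del i ((xk k)[j := br (xk k ! i) (xk k ! j)]))))"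
      by (subst sum.swap) (intro sum.cong refl sum.swap)
    also have "\<dots> = (\<Sum>j\<le>n. \<Sum>i<j. smult ((-1) ^ (i + 1)) (deriv_action (br z) f (del i (xs[j := br (xs ! i) (xs ! j)]))))"
      using deriv_action_bracket_term[of scale smult n f xs _ _ "br z" br, OF f xs _ _ deriv]
      by (intro sum.cong refl) (simp add: scale_simps[symmetric] xk_def Let_def)
    finally show ?thesis .
  qed
  show ?thesis
    unfolding leib_d_def deriv_action_def[of _ "leib_d _ _ _ _ _ _"] xs sum.distrib
    using left right brackets unfolding xk_def by simp
qed

text \<open>Induction on the nilpotency index \<open>N\<close> of \<open>deriv_action (br z)\<close> on \<open>f\<close>: by induction
  \<open>deriv_action (br z) f = d h\<close>, and Cartan's formula gives \<open>z\<cdot>f = d (f (z # -) + h)\<close>;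
  inverting \<open>la z\<close>, which commutes with \<open>d\<close>, exhibits \<open>f\<close> as a coboundary.\<close>
lemma is_coboundary_if_deriv_action_nilpotent:
  fixes scale :: "'k \<Rightarrow> 'g \<Rightarrow> 'g"
  assumes bij: "bij (la z)"
    and la_comm: "\<And>x m. la z (la x m) = la x (la z m)" and ra_comm: "\<And>x m. la z (ra m x) = ra (la z m) x"
    and br_hom: "module_hom scale scale (br z)"
    and deriv: "\<And>x y. br z (br x y) = br (br z x) y + br x (br z y)"
    and la_br: "\<And>x m. la (br z x) m = 0" and ra_br: "\<And>x m. ra m (br z x) = 0"
    and f: "cochain scale smult (Suc m) f" and cocycle: "is_cocycle br smult la ra (Suc m) f"
    and nil: "\<And>xs. length xs = Suc m \<Longrightarrow> (deriv_action (br z) ^^ N) f xs = 0"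
  shows "is_coboundary scale br smult la ra m f"
  using f cocycle nil
proof (induction N arbitrary: f)
  case 0
  then show ?case
    unfolding is_coboundary_def
    by (intro exI[of _ "\<lambda>_. 0"]) (auto simp: leib_d_zero cochain_def scale_simps)
next
  case (Suc N)
  define T where "T = inv (la z)"
  have T_la: "T (la z m) = m" and la_T: "la z (T m) = m" for m
    using bij by (simp_all add: T_def bij_is_inj bij_is_surj surj_f_inv_f)
  have T_eq: "T a = b" if "a = la z b" for a b
    using that T_la by simp
  have T_add: "T (a + b) = T a + T b" and T_scale: "T (smult c a) = smult c (T a)"
    and T_la_comm: "T (la x a) = la x (T a)" and T_ra_comm: "T (ra a x) = ra (T a) x" for a b c x
    by (rule T_eq; simp add: la_T la_add module_hom.scale[OF la_hom] la_comm ra_comm)+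
  have Df: "cochain scale smult (Suc m) (deriv_action (br z) f)"
    using module Suc.prems(1) br_hom by (rule cochain_deriv_action)
  have "is_cocycle br smult la ra (Suc m) (deriv_action (br z) f)"
    using Suc.prems(1,2) deriv_action_leib_d_commute[OF Suc.prems(1) _ deriv la_br ra_br]
    by (simp add: is_cocycle_def deriv_action_def)
  moreover have "(deriv_action (br z) ^^ N) (deriv_action (br z) f) xs = 0" if "length xs = Suc m" for xs
    using Suc.prems(3)[OF that] by (simp add: funpow_Suc_right del: funpow.simps)
  ultimately obtain h where h: "cochain scale smult m h"
    and Df_eq: "\<And>xs. length xs = Suc m \<Longrightarrow> deriv_action (br z) f xs = leib_d br smult la ra m h xs"
    using Suc.IH[OF Df] unfolding is_coboundary_def by blast
  define g where "g ys = T (f (z # ys) + h ys)" for ys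
  have "cochain scale smult m g"
    unfolding g_def using cochain_add[OF module cochain_Cons[OF Suc.prems(1)] h] T_add T_scale
    by (rule cochain_compose)
  moreover have "f xs = leib_d br smult la ra m g xs" if xs: "length xs = Suc m" for xs
  proof -
    have "la z (f xs) = leib_d br smult la ra m (\<lambda>ys. f (z # ys)) xs + deriv_action (br z) f xs"
      using cartan_formula[OF xs, of f z] Suc.prems(2) xs by (simp add: is_cocycle_def algebra_simps)
    also have "\<dots> = leib_d br smult la ra m (\<lambda>ys. f (z # ys) + h ys) xs"
      by (simp add: Df_eq[OF xs] leib_d_add)
    finally have "f xs = T (leib_d br smult la ra m (\<lambda>ys. f (z # ys) + h ys) xs)"
      by (metis T_la)
    also have "\<dots> = leib_d br smult la ra m g xs"
      unfolding g_def by (rule leib_d_compose_equivariant[symmetric]) (rule T_add T_scale T_la_comm T_ra_comm)+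
    finally show ?thesis .
  qed
  ultimately show ?case
    unfolding is_coboundary_def by blast
qed

end

section \<open>Irreducible bimodules over nilpotent Lie algebras\<close>

lemma lie_algebra_anticomm:
  assumes "lie_algebra scale br"
  shows "br x y = - br y x"
proof -
  have left: "module_hom scale scale (br x)" and right: "module_hom scale scale (\<lambda>x. br x y)"
    and alt: "br x x = 0" for x y
    using assms unfolding lie_algebra_def by auto
  have "br (x + y) (x + y) = br x y + br y x"
    by (simp only: module_hom.add[OF right] module_hom.add[OF left] alt[of x] alt[of y] add_0_left add_0_right add.commute)
  then show ?thesis
    by (metis alt eq_neg_iff_add_eq_0)
qed

lemma lie_algebra_ad_derivation:
  assumes "lie_algebra scale br"
  shows "br z (br x y) = br (br z x) y + br x (br z y)"
proof -
  have "br z (br x y) + br x (br y z) + br y (br z x) = 0"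
    using assms unfolding lie_algebra_def by metis
  moreover have "br x (br y z) = - br x (br z y)"
    using lie_algebra_anticomm[OF assms, of y z] module_hom.neg assms
    unfolding lie_algebra_def by metis
  ultimately show ?thesis
    using lie_algebra_anticomm[OF assms, of y "br z x"] by (simp add: algebra_simps eq_neg_iff_add_eq_0)
qed

text \<open>The span of all \<open>m\<cdot>x + x\<cdot>m\<close> is a sub-bimodule on which the right action vanishes.\<close>
lemma irreducible_bimodule_symmetric_or_antisymmetric:
  assumes bim: "leibniz_bimodule scale br smult la ra" and irr: "irreducible_bimodule smult la ra"
  shows "symmetric_bimodule la ra \<or> (\<forall>x m. ra m x = 0)"
proof -
  have module: "module smult"
    using bim unfolding leibniz_bimodule_def module_iff_vector_space by blast
  have la_hom: "\<And>x. module_hom smult smult (la x)" and ra_hom: "\<And>x. module_hom smult smult (\<lambda>m. ra m x)"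
    and la_bracket: "\<And>x y m. la (br x y) m = la x (la y m) - la y (la x m)"
    and ra_la: "\<And>x y m. ra (la x m) y = la x (ra m y) - ra m (br x y)"
    and ra_ra: "\<And>x y m. ra (ra m x) y = ra m (br x y) - la x (ra m y)"
    using bim unfolding leibniz_bimodule_def by auto
  define S where "S = {ra m x + la x m | m x. True}"
  define M0 where "M0 = module.span smult S"
  have sub: "module.subspace smult M0"
    unfolding M0_def by (rule module.subspace_span[OF module])
  have S_M0: "S \<subseteq> M0"
    unfolding M0_def using module.span_base[OF module] by blast
  have la_closed: "la y w \<in> M0" if "w \<in> M0" for y w
  proof -
    have "la y ` S \<subseteq> M0"
    proof
      fix v assume "v \<in> la y ` S"
      then obtain m x where v: "v = la y (ra m x + la x m)"
        unfolding S_def by blast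
      have "v = (ra (la y m) x + la x (la y m)) + (ra m (br y x) + la (br y x) m)"
        unfolding v module_hom.add[OF la_hom] using la_bracket[of y x m] ra_la[of y m x]
        by (simp add: algebra_simps)
      then show "v \<in> M0"
        using S_M0 module.subspace_add[OF module sub] unfolding S_def by blast
    qed
    then have "module.span smult (la y ` S) \<subseteq> M0"
      by (rule module.span_minimal[OF module _ sub])
    then show ?thesis
      using that module_hom.span_image[OF la_hom] unfolding M0_def by blast
  qed
  have ra_vanishes: "ra w y = 0" if "w \<in> M0" for y w
  proof -
    have "S \<subseteq> {w. ra w y = 0}"
      unfolding S_def using module_hom.add[OF ra_hom] ra_la ra_ra by auto
    then have "M0 \<subseteq> {w. ra w y = 0}"
      unfolding M0_def by (rule module.span_minimal[OF module _ module_hom.subspace_kernel[OF ra_hom]])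
    then show ?thesis
      using that by blast
  qed
  have "sub_bimodule smult la ra M0"
    unfolding sub_bimodule_def
    using sub la_closed ra_vanishes module.subspace_0[OF module sub] by simp
  then have "M0 = {0} \<or> M0 = UNIV"
    using irr unfolding irreducible_bimodule_def by blast
  then show ?thesis
  proof
    assume "M0 = {0}"
    then have "ra m x + la x m = 0" for m x
      using S_M0 unfolding S_def by blast
    then show ?thesis
      unfolding symmetric_bimodule_def by (simp add: eq_neg_iff_add_eq_0)
  qed (use ra_vanishes in blast)
qed

text \<open>Take \<open>z\<close> in the last term of the lower central series that does not act trivially.\<close>
lemma nilpotent_lie_obtain_element_acting_centrally:
  assumes lie: "lie_algebra scale br" and nil: "nilpotent_lie scale br"
    and la_0: "\<And>m. la 0 m = 0" and acts: "\<exists>x m. la x m \<noteq> 0"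
  obtains z K where "\<exists>m. la z m \<noteq> 0" "\<And>x m. la (br x z) m = 0" "\<And>y. (br z ^^ K) y = 0"
proof -
  have module: "module scale"
    using lie unfolding lie_algebra_def module_iff_vector_space by blast
  define I where "I = {x. \<forall>m. la x m = 0}"
  obtain K where K: "lcs scale br K = {0}"
    using nil unfolding nilpotent_lie_def by blast
  have "lcs scale br K \<subseteq> I"
    unfolding K I_def using la_0 by simp
  then have least: "lcs scale br (LEAST j. lcs scale br j \<subseteq> I) \<subseteq> I"
    by (rule LeastI)
  have "\<not> lcs scale br 0 \<subseteq> I"
    using acts unfolding I_def by auto
  then obtain j where j: "(LEAST j. lcs scale br j \<subseteq> I) = Suc j"
    using least by (metis not0_implies_Suc)
  then have "\<not> lcs scale br j \<subseteq> I"
    using not_less_Least[of j "\<lambda>j. lcs scale br j \<subseteq> I"] by simp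
  then obtain z where z: "z \<in> lcs scale br j" and "z \<notin> I"
    by blast
  moreover have "la (br x z) m = 0" for x m
  proof -
    have "br x z \<in> lcs scale br (Suc j)"
      using z by (auto intro: module.span_base[OF module])
    then show ?thesis
      using least j unfolding I_def by auto
  qed
  moreover have "(br z ^^ k) y \<in> lcs scale br k" for k y
    by (induction k) (auto intro: module.span_base[OF module])
  then have "(br z ^^ K) y = 0" for y
    using K by blast
  ultimately show thesis
    using that unfolding I_def by blast
qed

lemma irreducible_bimodule_endomorphism_bij:
  assumes bim: "leibniz_bimodule scale br smult la ra" and fd: "finite_dimensional smult"
    and irr: "irreducible_bimodule smult la ra" and T: "module_hom smult smult T"
    and la_comm: "\<And>x m. T (la x m) = la x (T m)" and ra_comm: "\<And>x m. T (ra m x) = ra (T m) x"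
    and nonzero: "\<exists>m. T m \<noteq> 0"
  shows "bij T"
proof -
  have vs: "vector_space smult" and la_hom: "\<And>x. module_hom smult smult (la x)"
    and ra_hom: "\<And>x. module_hom smult smult (\<lambda>m. ra m x)"
    using bim unfolding leibniz_bimodule_def by auto
  have "sub_bimodule smult la ra {m. T m = 0}"
    unfolding sub_bimodule_def using module_hom.subspace_kernel[OF T] la_comm ra_comm
    by (simp add: module_hom.zero[OF la_hom] module_hom.zero[OF ra_hom, simplified])
  moreover have "{m. T m = 0} \<noteq> UNIV"
    using nonzero by auto
  ultimately have kernel: "{m. T m = 0} = {0}"
    using irr unfolding irreducible_bimodule_def by blast
  have inj: "inj T"
  proof (rule injI)
    fix a b assume "T a = T b"
    then have "a - b \<in> {m. T m = 0}"
      by (simp add: module_hom.diff[OF T])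
    then show "a = b"
      using kernel by simp
  qed
  obtain B where B: "finite B" "module.span smult B = UNIV"
    using fd unfolding finite_dimensional_def by blast
  obtain B' where B': "\<not> module.dependent smult B'" "UNIV \<subseteq> module.span smult B'"
    by (rule vector_space.basis_exists[OF vs, of UNIV])
  have "finite B'"
    using vector_space.independent_span_bound[OF vs B(1) B'(1)] B(2) by simp
  then have "finite_dimensional_vector_space smult B'"
    using vs B' unfolding finite_dimensional_vector_space_def finite_dimensional_vector_space_axioms_def
    by auto
  then have "surj T"
    using inj T by (simp add: finite_dimensional_vector_space.linear_inj_imp_surj flip: module_hom_iff_linear)
  with inj show ?thesis
    by (simp add: bij_def)
qed

lemma leibniz_bimodule_obtain_invertible_central_element:
  assumes lie: "lie_algebra scale br" and nil: "nilpotent_lie scale br"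
    and bim: "leibniz_bimodule scale br smult la ra" and fd: "finite_dimensional smult"
    and irr: "irreducible_bimodule smult la ra" and nontriv: "nontrivial_bimodule la ra"
  obtains z K where "bij (la z)"
    "\<And>x m. la z (la x m) = la x (la z m)" "\<And>x m. la z (ra m x) = ra (la z m) x"
    "\<And>x m. la (br z x) m = 0" "\<And>x m. ra m (br z x) = 0" "\<And>y. (br z ^^ K) y = 0"
proof -
  have la_hom: "\<And>x. module_hom smult smult (la x)" and la_lin: "\<And>m. module_hom scale smult (\<lambda>x. la x m)"
    and la_bracket: "\<And>x y m. la (br x y) m = la x (la y m) - la y (la x m)"
    using bim unfolding leibniz_bimodule_def by auto
  have sym_or_anti: "symmetric_bimodule la ra \<or> (\<forall>x m. ra m x = 0)"
    using bim irr by (rule irreducible_bimodule_symmetric_or_antisymmetric)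
  then have "\<exists>x m. la x m \<noteq> 0"
    using nontriv unfolding nontrivial_bimodule_def symmetric_bimodule_def by (metis minus_zero)
  then obtain z K where z_acts: "\<exists>m. la z m \<noteq> 0" and br_z: "\<And>x m. la (br x z) m = 0"
    and z_nil: "\<And>y. (br z ^^ K) y = 0"
    using nilpotent_lie_obtain_element_acting_centrally[where la = la, OF lie nil module_hom.zero[OF la_lin]]
    by blast
  have la_comm: "la z (la x m) = la x (la z m)" for x m
    using la_bracket[of x z m] br_z[of x m] by simp
  have la_br: "la (br z x) m = 0" for x m
    using la_bracket[of z x m] la_comm[of x m] by simp
  have ra_br: "ra m (br z x) = 0" for x m
    using sym_or_anti la_br unfolding symmetric_bimodule_def by auto
  have ra_comm: "la z (ra m x) = ra (la z m) x" for x m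
    using sym_or_anti la_comm module_hom.neg[OF la_hom] module_hom.zero[OF la_hom]
    unfolding symmetric_bimodule_def by auto
  have "bij (la z)"
    using irreducible_bimodule_endomorphism_bij[where T = "la z", OF bim fd irr la_hom la_comm ra_comm z_acts] .
  then show thesis
    using la_comm ra_comm la_br ra_br z_nil by (rule that)
qed

lemma HL_vanishes_Suc_if_invertible_central_element:
  assumes lie: "lie_algebra scale br" and bim: "leibniz_bimodule scale br smult la ra"
    and bij: "bij (la z)"
    and la_comm: "\<And>x m. la z (la x m) = la x (la z m)" and ra_comm: "\<And>x m. la z (ra m x) = ra (la z m) x"
    and la_br: "\<And>x m. la (br z x) m = 0" and ra_br: "\<And>x m. ra m (br z x) = 0"
    and z_nil: "\<And>y. (br z ^^ K) y = 0"
  shows "HL_vanishes scale br smult la ra (Suc n)"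
proof -
  have module: "module smult" and la_hom: "\<And>x. module_hom smult smult (la x)"
    and ra_hom: "\<And>x. module_hom smult smult (\<lambda>m. ra m x)"
    using bim unfolding leibniz_bimodule_def module_iff_vector_space by auto
  have br_hom: "module_hom scale scale (br z)" and br_z_0: "br z 0 = 0"
    using lie module_hom.zero unfolding lie_algebra_def by blast+
  show ?thesis
    unfolding HL_vanishes_Suc_iff
    using is_coboundary_if_deriv_action_nilpotent[where smult = smult and la = la and ra = ra and br = br
        and z = z and scale = scale, OF module la_hom ra_hom bij la_comm ra_comm br_hom
        lie_algebra_ad_derivation[OF lie, of z] la_br ra_br]
      funpow_deriv_action_eq_0[where \<delta> = "br z" and K = K and scale = scale and smult = smult] z_nil br_z_0
    by blast
qed

lemma HL_vanishes_0_if_symmetric: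
  assumes bim: "leibniz_bimodule scale br smult la ra" and sym: "symmetric_bimodule la ra"
    and inj: "inj (la z)"
  shows "HL_vanishes scale br smult la ra 0"
  unfolding HL_vanishes_0_iff is_cocycle_def
proof (intro allI impI)
  have module: "module smult" and la_hom: "\<And>x. module_hom smult smult (la x)"
    using bim unfolding leibniz_bimodule_def module_iff_vector_space by auto
  fix f
  assume "\<forall>xs. length xs = Suc 0 \<longrightarrow> leib_d br smult la ra 0 f xs = 0"
  then have "leib_d br smult la ra 0 f [z] = 0"
    by simp
  then have "la z (f []) = 0"
    using sym by (simp add: leib_d_def symmetric_bimodule_def module.scale_minus_left[OF module]
        module.scale_one[OF module])
  then show "f [] = 0"
    using inj module_hom.zero[OF la_hom] by (metis injD)
qed

theorem proposition2p8:
  fixes scale :: "'k::field \<Rightarrow> 'g::ab_group_add \<Rightarrow> 'g"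
    and br :: "'g \<Rightarrow> 'g \<Rightarrow> 'g"
    and smult :: "'k \<Rightarrow> 'm::ab_group_add \<Rightarrow> 'm"
    and la :: "'g \<Rightarrow> 'm \<Rightarrow> 'm"
    and ra :: "'m \<Rightarrow> 'g \<Rightarrow> 'm"
  assumes "lie_algebra scale br"
    and "finite_dimensional scale"
    and "nilpotent_lie scale br"
    and "leibniz_bimodule scale br smult la ra"
    and "finite_dimensional smult"
    and "irreducible_bimodule smult la ra"
    and "nontrivial_bimodule la ra"
  shows "(\<forall>n. n > 0 \<longrightarrow> HL_vanishes scale br smult la ra n)
    \<and> (symmetric_bimodule la ra \<longrightarrow> (\<forall>n. HL_vanishes scale br smult la ra n))"
proof -
  obtain z K where "bij (la z)"
    and "\<And>x m. la z (la x m) = la x (la z m)" "\<And>x m. la z (ra m x) = ra (la z m) x"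
    and "\<And>x m. la (br z x) m = 0" "\<And>x m. ra m (br z x) = 0" "\<And>y. (br z ^^ K) y = 0"
    using leibniz_bimodule_obtain_invertible_central_element[OF assms(1,3-7)] by blast
  then have "HL_vanishes scale br smult la ra (Suc n)" for n
    using HL_vanishes_Suc_if_invertible_central_element[OF assms(1,4)] by blast
  moreover have "HL_vanishes scale br smult la ra 0" if "symmetric_bimodule la ra"
    using HL_vanishes_0_if_symmetric[OF assms(4) that bij_is_inj] \<open>bij (la z)\<close> .
  ultimately show ?thesis
    by (metis gr0_implies_Suc not0_implies_Suc)
qed

end
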